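(* Let $n\ge2$, $s\in\mathbb{R}$ with $s\ne1$, and $k\ge1$. If $\phi\in C^1(\mathbb{R}^n)$ satisfies $\operatorname{supp}\phi\subset B(k)$, then $$\sup_{0<r\le k}\ r^{(n-2)/2}(1+k+r)^{1/2}(1+k-r)^{(s-1)/2}\|\phi(r\,\cdot)\|_{L^2(S^{n-1})}\le C\Big(\|(1+k-r)^{s/2}\partial_r\phi\|_{L^2(\mathbb{R}^n)}+\big\|(1+k-r)^{s/2}\tfrac{\phi}{r}\big\|_{L^2(\mathbb{R}^n)}\Big),$$ where $C$ depends only on $n$ and $s$ (independent of $k$).
   Context: $r=|x|$, $\partial_r$ is the radial derivative, $\phi(r\,\cdot)$ denotes the function $\omega\mapsto\phi(r\omega)$ on the unit sphere $S^{n-1}$, and $B(k)=\{x\in\mathbb{R}^n:|x|\le k\}$. *)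

theory Defs
  imports "HOL-Analysis.Analysis"
begin

definition C1_fun :: "('a::euclidean_space \<Rightarrow> real) \<Rightarrow> bool" where
  "C1_fun \<phi> \<longleftrightarrow> (\<exists>D :: 'a \<Rightarrow> ('a \<Rightarrow>\<^sub>L real).
      (\<forall>x. (\<phi> has_derivative blinfun_apply (D x)) (at x)) \<and> continuous_on UNIV D)"

definition supp :: "('a::real_normed_vector \<Rightarrow> real) \<Rightarrow> 'a set" where
  "supp \<phi> = closure {x. \<phi> x \<noteq> 0}"

definition radial_deriv :: "('a::euclidean_space \<Rightarrow> real) \<Rightarrow> 'a \<Rightarrow> real" where
  "radial_deriv \<phi> x = frechet_derivative \<phi> (at x) (x /\<^sub>R norm x)"

text \<open>Surface measure on the unit sphere S^{n-1}, via the cone construction: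
  sigma(A) = n * Lebesgue measure of {t w | 0 < t \<le> 1, w \<in> A}
  (push-forward of n * Lebesgue on the punctured unit ball under x \<mapsto> x/|x|).\<close>
definition sphere_measure :: "('a::euclidean_space) measure" where
  "sphere_measure =
     distr (density (restrict_space lborel (ball 0 1 - {0})) (\<lambda>_. ennreal (real DIM('a))))
           (restrict_space borel (sphere 0 1)) (\<lambda>x. x /\<^sub>R norm x)"

definition L2_norm :: "'a measure \<Rightarrow> ('a \<Rightarrow> real) \<Rightarrow> ennreal" where
  "L2_norm M g =
     (let I = (\<integral>\<^sup>+ x. ennreal ((g x)\<^sup>2) \<partial>M)
      in if I = \<infinity> then \<infinity> else ennreal (sqrt (enn2real I)))"

end

theory Submission
  imports Defs
begin

text \<open>Along a ray \<open>x = \<rho> \<omega>\<close> the estimate becomes a one-dimensional inequality for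
  \<open>u(\<rho>) = \<phi>(\<rho> \<omega>)\<close>, which vanishes at \<open>\<rho> = k\<close>. For \<open>r \<le> (1 + k)/2\<close> all weights are comparable
  on \<open>[r/2, r]\<close>, and \<open>u(r)\<^sup>2\<close> is bounded by the mean of \<open>u\<^sup>2\<close> there plus
  \<open>\<integral> |2 u u'| \<le> \<integral> \<rho> (u'\<^sup>2 + u\<^sup>2/\<rho>\<^sup>2)\<close>. Near the boundary one uses
  \<open>B = (1 + k - \<rho>)\<^sup>s\<^sup>-\<^sup>1 u\<^sup>2\<close>, whose derivative satisfies \<open>(s - 1) B' \<le> (1 + k - \<rho>)\<^sup>s u'\<^sup>2\<close>:
  for \<open>s < 1\<close> integrate from \<open>r\<close> to \<open>k\<close>, where \<open>B\<close> vanishes; for \<open>s > 1\<close> integrate up to \<open>r\<close>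
  from a point of \<open>[r/4, r/2]\<close> where \<open>B\<close> is at most its mean. This is where \<open>s \<noteq> 1\<close> enters.
  Integrating the resulting bound over the sphere and passing to polar coordinates gives the
  proposition with a constant depending only on \<open>n\<close> and \<open>s\<close>.\<close>

section \<open>Polar coordinates\<close>

lemma nn_integral_lborel_scaleR:
  fixes f :: "'a::euclidean_space \<Rightarrow> ennreal"
  assumes [measurable]: "f \<in> borel_measurable borel" and "c \<noteq> 0"
  shows "(\<integral>\<^sup>+x. f x \<partial>lborel) = ennreal (\<bar>c\<bar> ^ DIM('a)) * (\<integral>\<^sup>+x. f (c *\<^sub>R x) \<partial>lborel)"
  by (subst lborel_affine[OF \<open>c \<noteq> 0\<close>, of 0])
     (simp add: nn_integral_density nn_integral_distr nn_integral_cmult)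

lemma measurable_pred_mem_ball[measurable]:
  fixes f :: "'b \<Rightarrow> 'a::euclidean_space"
  assumes [measurable]: "f \<in> M \<rightarrow>\<^sub>M borel" "g \<in> borel_measurable M"
  shows "Measurable.pred M (\<lambda>x. f x \<in> ball 0 (g x))"
  unfolding mem_ball by measurable

lemma measurable_pair_lborel_of_borel:
  fixes f :: "'a::euclidean_space \<times> 'b::euclidean_space \<Rightarrow> 'c::topological_space"
  assumes "f \<in> borel_measurable (borel \<Otimes>\<^sub>M borel)"
  shows "f \<in> borel_measurable (lborel \<Otimes>\<^sub>M lborel)"
  using assms by (subst measurable_cong_sets[OF sets_pair_measure_cong[OF sets_lborel sets_lborel] refl])

lemma nn_integral_inverse_power_tail:
  assumes "d \<ge> 1"
  shows "(\<integral>\<^sup>+t. indicator {1<..} t * ennreal (1 / t ^ (d + 1)) \<partial>lborel) = ennreal (1 / real d)"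
proof -
  have "(\<integral>\<^sup>+t. indicator {1<..} t * ennreal (1 / t ^ (d + 1)) \<partial>lborel)
      = (\<integral>\<^sup>+t. ennreal (1 / t ^ (d + 1)) * indicator {1..} t \<partial>lborel)"
    by (intro nn_integral_cong_AE) (auto simp: mult.commute indicator_def intro!: AE_I[where N="{1}"])
  also have "\<dots> = ennreal (0 - (- 1 / (real d * 1 ^ d)))"
  proof (rule nn_integral_FTC_atLeast[where F="\<lambda>x. - 1 / (real d * x ^ d)" and T=0])
    fix x :: real assume "1 \<le> x"
    then show "((\<lambda>x. - 1 / (real d * x ^ d)) has_real_derivative 1 / x ^ (d + 1)) (at x)"
      using assms
      by (auto intro!: derivative_eq_intros) (cases d; simp add: field_simps)
  next
    have "filterlim (\<lambda>x::real. real d * x ^ d) at_top at_top"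
      using assms by (intro filterlim_tendsto_pos_mult_at_top[OF tendsto_const])
        (auto intro!: filterlim_pow_at_top filterlim_ident)
    then show "((\<lambda>x::real. - 1 / (real d * x ^ d)) \<longlongrightarrow> 0) at_top"
      using tendsto_minus[OF tendsto_divide_0[OF tendsto_const filterlim_at_top_imp_at_infinity]]
      by simp
  qed auto
  finally show ?thesis by simp
qed

lemma nn_integral_unit_ball_rescale:
  fixes F :: "'a::euclidean_space \<Rightarrow> ennreal"
  assumes [measurable]: "F \<in> borel_measurable borel"
  shows "(\<integral>\<^sup>+x. indicator (ball 0 1 - {0}) x *
           (indicator {0<..} \<rho> * ennreal (\<rho> ^ (DIM('a) - 1)) * F (\<rho> *\<^sub>R (x /\<^sub>R norm x))) \<partial>lborel)
       = (\<integral>\<^sup>+y. indicator {0<..} \<rho> * ennreal (1 / \<rho>) *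
           (indicator (ball 0 \<rho> - {0}) y * F (\<rho> *\<^sub>R (y /\<^sub>R norm y))) \<partial>lborel)"
proof (cases "\<rho> > 0")
  case True
  have "(\<lambda>y. indicator (ball 0 1 - {0}) ((1/\<rho>) *\<^sub>R y) * F (\<rho> *\<^sub>R (((1/\<rho>) *\<^sub>R y) /\<^sub>R norm ((1/\<rho>) *\<^sub>R y))))
      = (\<lambda>y. indicator (ball 0 \<rho> - {0}) y * F (\<rho> *\<^sub>R (y /\<^sub>R norm y)))"
    using True by (auto simp: indicator_def field_simps)
  then have dilate: "(\<integral>\<^sup>+x. indicator (ball 0 1 - {0}) x * F (\<rho> *\<^sub>R (x /\<^sub>R norm x)) \<partial>lborel)
      = ennreal (1 / \<rho> ^ DIM('a)) * (\<integral>\<^sup>+y. indicator (ball 0 \<rho> - {0}) y * F (\<rho> *\<^sub>R (y /\<^sub>R norm y)) \<partial>lborel)"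
    using True by (subst nn_integral_lborel_scaleR[of _ "1/\<rho>"]) (auto simp: power_one_over)
  have "(\<integral>\<^sup>+x. indicator (ball 0 1 - {0}) x *
      (indicator {0<..} \<rho> * ennreal (\<rho> ^ (DIM('a) - 1)) * F (\<rho> *\<^sub>R (x /\<^sub>R norm x))) \<partial>lborel)
    = ennreal (\<rho> ^ (DIM('a) - 1)) * (\<integral>\<^sup>+x. indicator (ball 0 1 - {0}) x * F (\<rho> *\<^sub>R (x /\<^sub>R norm x)) \<partial>lborel)"
    using True by (subst nn_integral_cmult[symmetric]) (auto intro!: nn_integral_cong simp: mult_ac)
  also have "\<dots> = ennreal (\<rho> ^ (DIM('a) - 1)) * ennreal (1 / \<rho> ^ DIM('a))
      * (\<integral>\<^sup>+y. indicator (ball 0 \<rho> - {0}) y * F (\<rho> *\<^sub>R (y /\<^sub>R norm y)) \<partial>lborel)"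
    unfolding dilate by (simp add: mult.assoc)
  also have "ennreal (\<rho> ^ (DIM('a) - 1)) * ennreal (1 / \<rho> ^ DIM('a)) = ennreal (1 / \<rho>)"
    using True DIM_positive[where 'a='a] by (cases "DIM('a)") (simp_all add: ennreal_mult[symmetric] field_simps)
  finally show ?thesis
    using True by (simp add: nn_integral_cmult mult.assoc)
qed simp

lemma nn_integral_punctured_rescale:
  fixes F :: "'a::euclidean_space \<Rightarrow> ennreal"
  assumes [measurable]: "F \<in> borel_measurable borel"
  shows "(\<integral>\<^sup>+y. indicator (-{0}) y * (indicator {1<..} t * ennreal (1 / t) * F (t *\<^sub>R y)) \<partial>lborel)
       = indicator {1<..} t * ennreal (1 / t ^ (DIM('a) + 1)) * (\<integral>\<^sup>+y. indicator (-{0}) y * F y \<partial>lborel)"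
proof (cases "t > 1")
  case True
  have "(\<integral>\<^sup>+y. indicator (-{0}) y * F y \<partial>lborel)
      = ennreal (t ^ DIM('a)) * (\<integral>\<^sup>+y. indicator (-{0}) (t *\<^sub>R y) * F (t *\<^sub>R y) \<partial>lborel)"
    using True by (subst nn_integral_lborel_scaleR[of _ t]) auto
  also have "(\<lambda>y. indicator (-{0}) (t *\<^sub>R y) * F (t *\<^sub>R y)) = (\<lambda>y. indicator (-{0}) y * F (t *\<^sub>R y))"
    using True by (auto simp: indicator_def)
  finally have dilate: "(\<integral>\<^sup>+y. indicator (-{0}) y * F (t *\<^sub>R y) \<partial>lborel)
      = ennreal (1 / t ^ DIM('a)) * (\<integral>\<^sup>+y. indicator (-{0}) y * F y \<partial>lborel)"
    using True by (simp add: mult.assoc[symmetric] ennreal_mult[symmetric])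
  have "(\<integral>\<^sup>+y. indicator (-{0}) y * (indicator {1<..} t * ennreal (1 / t) * F (t *\<^sub>R y)) \<partial>lborel)
      = ennreal (1 / t) * (\<integral>\<^sup>+y. indicator (-{0}) y * F (t *\<^sub>R y) \<partial>lborel)"
    using True by (subst nn_integral_cmult[symmetric]) (auto intro!: nn_integral_cong simp: mult_ac)
  also have "\<dots> = ennreal (1 / t) * ennreal (1 / t ^ DIM('a)) * (\<integral>\<^sup>+y. indicator (-{0}) y * F y \<partial>lborel)"
    unfolding dilate by (simp add: mult.assoc)
  also have "ennreal (1 / t) * ennreal (1 / t ^ DIM('a)) = ennreal (1 / t ^ (DIM('a) + 1))"
    using True by (simp add: ennreal_mult[symmetric])
  finally show ?thesis using True by simp
qed simp

lemma nn_integral_ray_rescale: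
  fixes F :: "'a::euclidean_space \<Rightarrow> ennreal"
  assumes [measurable]: "F \<in> borel_measurable borel" and "y \<noteq> 0"
  shows "(\<integral>\<^sup>+\<rho>. indicator {0<..} \<rho> * ennreal (1 / \<rho>) * (indicator (ball 0 \<rho> - {0}) y * F (\<rho> *\<^sub>R (y /\<^sub>R norm y))) \<partial>lborel)
       = (\<integral>\<^sup>+t. indicator {1<..} t * ennreal (1 / t) * F (t *\<^sub>R y) \<partial>lborel)"
proof -
  have ny: "norm y > 0" using \<open>y \<noteq> 0\<close> by simp
  have "(\<integral>\<^sup>+\<rho>. indicator {0<..} \<rho> * ennreal (1 / \<rho>) * (indicator (ball 0 \<rho> - {0}) y * F (\<rho> *\<^sub>R (y /\<^sub>R norm y))) \<partial>lborel)
      = ennreal \<bar>norm y\<bar> * (\<integral>\<^sup>+t. indicator {0<..} (0 + norm y * t) * ennreal (1 / (0 + norm y * t))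
          * (indicator (ball 0 (0 + norm y * t) - {0}) y * F ((0 + norm y * t) *\<^sub>R (y /\<^sub>R norm y))) \<partial>lborel)"
    using ny by (intro nn_integral_real_affine) measurable
  also have "\<dots> = (\<integral>\<^sup>+t. ennreal (norm y) * (indicator {0<..} (norm y * t) * ennreal (1 / (norm y * t))
          * (indicator (ball 0 (norm y * t) - {0}) y * F ((norm y * t) *\<^sub>R (y /\<^sub>R norm y)))) \<partial>lborel)"
    by (subst nn_integral_cmult) auto
  also have "\<dots> = (\<integral>\<^sup>+t. indicator {1<..} t * ennreal (1 / t) * F (t *\<^sub>R y) \<partial>lborel)"
  proof (rule nn_integral_cong)
    fix t :: real
    show "ennreal (norm y) * (indicator {0<..} (norm y * t) * ennreal (1 / (norm y * t))
          * (indicator (ball 0 (norm y * t) - {0}) y * F ((norm y * t) *\<^sub>R (y /\<^sub>R norm y))))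
        = indicator {1<..} t * ennreal (1 / t) * F (t *\<^sub>R y)"
    proof (cases "t > 1")
      case True
      have weight: "ennreal (norm y) * ennreal (1 / (norm y * t)) = ennreal (1 / t)"
        using ny True by (simp add: ennreal_mult[symmetric])
      have point: "(norm y * t) *\<^sub>R (y /\<^sub>R norm y) = t *\<^sub>R y"
        using ny by simp
      show ?thesis
        unfolding point using ny True \<open>y \<noteq> 0\<close> by (simp add: indicator_def mult.assoc[symmetric] weight)
    next
      case False
      then have "\<not> (y \<in> ball 0 (norm y * t) \<and> norm y * t > 0)"
        using ny by (auto simp: mult_le_cancel_left1)
      then show ?thesis using False by (auto simp: indicator_def)
    qed
  qed
  finally show ?thesis .
qed

text \<open>Proved by Fubini and the substitutions \<open>x = y/\<rho>\<close>, \<open>\<rho> = t |y|\<close>, \<open>y \<mapsto> y/t\<close>;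
  the remaining factor is \<open>\<integral>\<^sub>1\<^sup>\<infinity> t\<^sup>-\<^sup>n\<^sup>-\<^sup>1 dt = 1/n\<close>.\<close>
lemma nn_integral_polar:
  fixes F :: "'a::euclidean_space \<Rightarrow> ennreal"
  assumes F[measurable]: "F \<in> borel_measurable borel"
  shows "ennreal (real DIM('a)) * (\<integral>\<^sup>+x. indicator (ball 0 1 - {0}) x *
      (\<integral>\<^sup>+\<rho>. indicator {0<..} \<rho> * ennreal (\<rho> ^ (DIM('a) - 1)) * F (\<rho> *\<^sub>R (x /\<^sub>R norm x)) \<partial>lborel) \<partial>lborel)
    = (\<integral>\<^sup>+y. indicator (-{0}) y * F y \<partial>lborel)"
proof -
  define I where "I = (\<integral>\<^sup>+y. indicator (-{0}) y * F y \<partial>lborel)"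
  have "(\<integral>\<^sup>+x. indicator (ball 0 1 - {0}) x *
      (\<integral>\<^sup>+\<rho>. indicator {0<..} \<rho> * ennreal (\<rho> ^ (DIM('a) - 1)) * F (\<rho> *\<^sub>R (x /\<^sub>R norm x)) \<partial>lborel) \<partial>lborel)
    = (\<integral>\<^sup>+\<rho>. (\<integral>\<^sup>+x. indicator (ball 0 1 - {0}) x *
         (indicator {0<..} \<rho> * ennreal (\<rho> ^ (DIM('a) - 1)) * F (\<rho> *\<^sub>R (x /\<^sub>R norm x))) \<partial>lborel) \<partial>lborel)"
    by (subst lborel_pair.Fubini', rule measurable_pair_lborel_of_borel, measurable)
       (intro nn_integral_cong nn_integral_cmult[symmetric], measurable)
  also have "\<dots> = (\<integral>\<^sup>+\<rho>. (\<integral>\<^sup>+y. indicator {0<..} \<rho> * ennreal (1 / \<rho>) *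
         (indicator (ball 0 \<rho> - {0}) y * F (\<rho> *\<^sub>R (y /\<^sub>R norm y))) \<partial>lborel) \<partial>lborel)"
    by (rule nn_integral_cong) (rule nn_integral_unit_ball_rescale[OF F])
  also have "\<dots> = (\<integral>\<^sup>+y. (\<integral>\<^sup>+\<rho>. indicator {0<..} \<rho> * ennreal (1 / \<rho>) *
         (indicator (ball 0 \<rho> - {0}) y * F (\<rho> *\<^sub>R (y /\<^sub>R norm y))) \<partial>lborel) \<partial>lborel)"
    by (rule lborel_pair.Fubini') (rule measurable_pair_lborel_of_borel, measurable)
  also have "\<dots> = (\<integral>\<^sup>+y. indicator (-{0}) y * (\<integral>\<^sup>+t. indicator {1<..} t * ennreal (1 / t) * F (t *\<^sub>R y) \<partial>lborel) \<partial>lborel)"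
  proof (rule nn_integral_cong)
    fix y :: 'a
    show "(\<integral>\<^sup>+\<rho>. indicator {0<..} \<rho> * ennreal (1 / \<rho>) *
         (indicator (ball 0 \<rho> - {0}) y * F (\<rho> *\<^sub>R (y /\<^sub>R norm y))) \<partial>lborel)
        = indicator (-{0}) y * (\<integral>\<^sup>+t. indicator {1<..} t * ennreal (1 / t) * F (t *\<^sub>R y) \<partial>lborel)"
      by (cases "y = 0") (simp, subst nn_integral_ray_rescale[OF F], simp_all)
  qed
  also have "\<dots> = (\<integral>\<^sup>+t. (\<integral>\<^sup>+y. indicator (-{0}) y * (indicator {1<..} t * ennreal (1 / t) * F (t *\<^sub>R y)) \<partial>lborel) \<partial>lborel)"
    by (subst lborel_pair.Fubini', rule measurable_pair_lborel_of_borel, measurable)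
       (intro nn_integral_cong nn_integral_cmult[symmetric], measurable)
  also have "\<dots> = (\<integral>\<^sup>+t. indicator {1<..} t * ennreal (1 / t ^ (DIM('a) + 1)) * I \<partial>lborel)"
    unfolding I_def by (rule nn_integral_cong) (rule nn_integral_punctured_rescale[OF F])
  also have "\<dots> = (\<integral>\<^sup>+t. indicator {1<..} t * ennreal (1 / t ^ (DIM('a) + 1)) \<partial>lborel) * I"
    by (rule nn_integral_multc) measurable
  also have "\<dots> = ennreal (1 / real DIM('a)) * I"
    by (subst nn_integral_inverse_power_tail) (simp_all add: Suc_le_eq)
  finally show ?thesis
    unfolding I_def[symmetric] by (simp add: mult.assoc[symmetric] ennreal_mult[symmetric])
qed

section \<open>A weighted trace inequality on a ray\<close>

lemma diff_le_integral_of_deriv_le: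
  fixes f f' g :: "real \<Rightarrow> real"
  assumes "a \<le> b"
    and "\<And>x. x \<in> {a..b} \<Longrightarrow> (f has_real_derivative f' x) (at x)"
    and "\<And>x. x \<in> {a..b} \<Longrightarrow> f' x \<le> g x"
    and "g integrable_on {a..b}"
  shows "f b - f a \<le> integral {a..b} g"
proof -
  have "(f' has_integral (f b - f a)) {a..b}"
    using assms(1,2) by (intro fundamental_theorem_of_calculus)
      (auto simp: has_real_derivative_iff_has_vector_derivative[symmetric] intro: has_field_derivative_at_within)
  then show ?thesis
    using assms(3,4) by (intro has_integral_le[OF _ integrable_integral]) auto
qed

text \<open>Compare \<open>f b\<close> with the value at a minimum point of \<open>f\<close> on \<open>[a, c]\<close>.\<close>
lemma le_mean_plus_integral_of_deriv_le:
  fixes f f' g :: "real \<Rightarrow> real"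
  assumes "a < c" "c \<le> b"
    and der: "\<And>x. x \<in> {a..b} \<Longrightarrow> (f has_real_derivative f' x) (at x)"
    and "\<And>x. x \<in> {a..b} \<Longrightarrow> f' x \<le> g x"
    and "\<And>x. x \<in> {a..b} \<Longrightarrow> 0 \<le> g x"
    and g: "continuous_on {a..b} g"
  shows "f b \<le> integral {a..c} f / (c - a) + integral {a..b} g"
proof -
  have f: "continuous_on {a..b} f"
    using der by (intro continuous_at_imp_continuous_on ballI DERIV_isCont) auto
  have "continuous_on {a..c} f"
    using assms(2) by (auto intro: continuous_on_subset[OF f])
  then have "\<exists>x0\<in>{a..c}. \<forall>y\<in>{a..c}. f x0 \<le> f y"
    using assms(1) by (intro continuous_attains_inf) auto
  then obtain x0 where x0: "x0 \<in> {a..c}" "\<And>y. y \<in> {a..c} \<Longrightarrow> f x0 \<le> f y"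
    by blast
  have "(c - a) * f x0 = integral {a..c} (\<lambda>_. f x0)"
    using assms(1) by simp
  also have "\<dots> \<le> integral {a..c} f"
    using x0 assms(2) by (intro integral_le integrable_continuous_interval continuous_on_subset[OF f]) auto
  finally have mean: "f x0 \<le> integral {a..c} f / (c - a)"
    using assms(1) by (simp add: field_simps)
  have sub: "{x0..b} \<subseteq> {a..b}" using x0 by auto
  have "f b - f x0 \<le> integral {x0..b} g"
    using x0 assms(2) sub der assms(4) integrable_continuous_interval[OF continuous_on_subset[OF g sub]]
    by (intro diff_le_integral_of_deriv_le[where f'=f']) auto
  also have "\<dots> \<le> integral {a..b} g"
    using sub assms(5) integrable_continuous_interval[OF continuous_on_subset[OF g sub]]
      integrable_continuous_interval[OF g] by (intro integral_subset_le) auto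
  finally show ?thesis using mean by linarith
qed

lemma powr_le_powr_abs_mult:
  fixes x y c e :: real
  assumes "0 < x" "0 < y" "x \<le> c * y" "y \<le> c * x" "1 \<le> c"
  shows "x powr e \<le> c powr \<bar>e\<bar> * y powr e"
proof (cases "e \<ge> 0")
  case True
  have "x powr e \<le> (c * y) powr e" using assms True by (intro powr_mono2) auto
  also have "\<dots> = c powr \<bar>e\<bar> * y powr e" using assms True by (simp add: powr_mult)
  finally show ?thesis .
next
  case False
  have "y / c \<le> x" using assms by (simp add: field_simps)
  then have "x powr e \<le> (y / c) powr e" using assms False by (intro powr_mono2') auto
  also have "\<dots> = c powr \<bar>e\<bar> * y powr e"
    using assms False by (simp add: powr_divide powr_minus field_simps)
  finally show ?thesis .
qed

lemma power_le_power_scaled: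
  fixes x y c :: real
  assumes "0 \<le> x" "x \<le> c * y" "1 \<le> c" "m \<le> n"
  shows "x ^ m \<le> c ^ n * y ^ m"
proof -
  have "0 \<le> c * y" using assms by linarith
  then have "0 \<le> y" using assms by (simp add: zero_le_mult_iff)
  have "x ^ m \<le> (c * y) ^ m" using assms by (intro power_mono) auto
  also have "\<dots> = c ^ m * y ^ m" by (simp add: power_mult_distrib)
  also have "\<dots> \<le> c ^ n * y ^ m"
    using assms \<open>0 \<le> y\<close> by (intro mult_right_mono power_increasing) auto
  finally show ?thesis .
qed

lemma abs_two_mult_le_scaled_squares:
  fixes \<rho> a b :: real
  assumes "0 < \<rho>"
  shows "\<bar>2 * a * b\<bar> \<le> \<rho> * (b\<^sup>2 + a\<^sup>2 / \<rho>\<^sup>2)"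
proof -
  have "2 * \<bar>a\<bar> * (\<rho> * \<bar>b\<bar>) \<le> \<bar>a\<bar>\<^sup>2 + (\<rho> * \<bar>b\<bar>)\<^sup>2"
    by (rule sum_squares_bound)
  then have "\<rho> * \<bar>2 * a * b\<bar> \<le> a\<^sup>2 + \<rho>\<^sup>2 * b\<^sup>2"
    by (simp add: abs_mult power_mult_distrib algebra_simps)
  then have "\<bar>2 * a * b\<bar> \<le> (a\<^sup>2 + \<rho>\<^sup>2 * b\<^sup>2) / \<rho>"
    using assms by (simp add: pos_le_divide_eq mult.commute)
  also have "\<dots> = \<rho> * (b\<^sup>2 + a\<^sup>2 / \<rho>\<^sup>2)"
    using assms by (simp add: field_simps power2_eq_square)
  finally show ?thesis .
qed

definition trace_const :: "nat \<Rightarrow> real \<Rightarrow> real" where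
  "trace_const d s = 4 ^ d * (9 * 2 powr \<bar>s\<bar> + 16 + 12 / \<bar>s - 1\<bar>)"

lemma trace_const_ge:
  shows "9 * 4 ^ d * 2 powr \<bar>s\<bar> \<le> trace_const d s"
    and "4 ^ d * (16 + 12 / \<bar>s - 1\<bar>) \<le> trace_const d s"
    and "12 * 4 ^ d / \<bar>s - 1\<bar> \<le> trace_const d s"
  by (auto simp: trace_const_def algebra_simps)

text \<open>\<open>u\<close> is the profile \<open>\<rho> \<mapsto> \<phi>(\<rho> \<omega>)\<close> on a ray and \<open>d = n\<close>; \<open>energy\<close> is the squared
  integrand of the right-hand side times the polar Jacobian \<open>\<rho>\<^sup>n\<^sup>-\<^sup>1\<close>, and \<open>trace_weight r\<close> is the
  square of the weight on the left-hand side.\<close>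
locale radial_profile =
  fixes u u' :: "real \<Rightarrow> real" and k s :: real and d :: nat
  assumes dim: "d \<ge> 2" and k: "k \<ge> 1"
    and has_deriv: "\<And>\<rho>. 0 < \<rho> \<Longrightarrow> (u has_real_derivative u' \<rho>) (at \<rho>)"
    and continuous_deriv: "continuous_on {0<..} u'"
    and vanishes: "u k = 0"
begin

definition energy :: "real \<Rightarrow> real" where
  "energy \<rho> = (1 + k - \<rho>) powr s * ((u' \<rho>)\<^sup>2 + (u \<rho>)\<^sup>2 / \<rho>\<^sup>2) * \<rho> ^ (d - 1)"

definition trace_weight :: "real \<Rightarrow> real" where
  "trace_weight r = r ^ (d - 2) * (1 + k + r) * (1 + k - r) powr (s - 1)"

definition tail :: "real \<Rightarrow> real" where
  "tail \<rho> = (1 + k - \<rho>) powr (s - 1) * (u \<rho>)\<^sup>2"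

definition tail_deriv :: "real \<Rightarrow> real" where
  "tail_deriv \<rho> = (1 + k - \<rho>) powr (s - 2) * (2 * (1 + k - \<rho>) * u \<rho> * u' \<rho> - (s - 1) * (u \<rho>)\<^sup>2)"

lemma continuous_on_profile:
  assumes "0 < a" shows "continuous_on {a..b} u" "continuous_on {a..b} u'"
proof -
  have "continuous_on {0<..} u"
    using has_deriv by (intro continuous_at_imp_continuous_on ballI DERIV_isCont) auto
  moreover have "{a..b} \<subseteq> {0<..}" using assms by auto
  ultimately show "continuous_on {a..b} u" "continuous_on {a..b} u'"
    using continuous_on_subset continuous_deriv by blast+
qed

lemma power_dim_minus_two_mult: "(\<rho>::real) ^ (d - 2) * \<rho> = \<rho> ^ (d - 1)"
proof -
  have "d - 1 = Suc (d - 2)" using dim by arith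
  then show ?thesis by (simp only: power_Suc2)
qed

lemma energy_nonneg: "0 \<le> \<rho> \<Longrightarrow> 0 \<le> energy \<rho>"
  unfolding energy_def by (intro mult_nonneg_nonneg add_nonneg_nonneg) auto

lemma continuous_on_energy:
  assumes "0 < a" "b < 1 + k" shows "continuous_on {a..b} energy"
  unfolding energy_def using continuous_on_profile[OF assms(1)] assms
  by (intro continuous_intros) auto

lemma integral_le_energy:
  assumes "0 < a" "b < 1 + k"
    and "continuous_on {a..b} f" "\<And>\<rho>. \<rho> \<in> {a..b} \<Longrightarrow> f \<rho> \<le> c * energy \<rho>"
  shows "integral {a..b} f \<le> c * integral {a..b} energy"
proof -
  have "integral {a..b} f \<le> integral {a..b} (\<lambda>\<rho>. c * energy \<rho>)"
    using assms continuous_on_energy[OF assms(1,2)]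
    by (intro integral_le integrable_continuous_interval continuous_intros) auto
  then show ?thesis by simp
qed

lemma tail_has_derivative:
  assumes "0 < x" "x < 1 + k"
  shows "(tail has_real_derivative tail_deriv x) (at x)"
proof -
  define W where "W = 1 + k - x"
  have "W > 0" using assms by (simp add: W_def)
  have "((\<lambda>\<rho>. 1 + k - \<rho>) has_real_derivative - 1) (at x)"
    by (auto intro!: derivative_eq_intros)
  from DERIV_fun_powr[OF this, of "s - 1"]
  have weight: "((\<lambda>\<rho>. (1 + k - \<rho>) powr (s - 1)) has_real_derivative (1 - s) * W powr (s - 2)) (at x)"
    using assms by (simp add: W_def algebra_simps)
  have square: "((\<lambda>\<rho>. (u \<rho>)\<^sup>2) has_real_derivative 2 * u x * u' x) (at x)"
    using has_deriv[OF assms(1)] by (auto intro!: derivative_eq_intros)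
  have "W powr (s - 1) = W powr 1 * W powr (s - 2)"
    by (subst powr_add[symmetric]) simp
  then have "W powr (s - 1) = W * W powr (s - 2)"
    using \<open>W > 0\<close> by simp
  then show ?thesis
    using DERIV_mult[OF weight square] unfolding tail_def[abs_def]
    by (simp add: tail_deriv_def W_def[symmetric] algebra_simps power2_eq_square)
qed

text \<open>\<open>(s - 1) \<cdot> tail' = W\<^sup>s\<^sup>-\<^sup>2 (W\<^sup>2 u'\<^sup>2 - (W u' - (s - 1) u)\<^sup>2)\<close> with \<open>W = 1 + k - \<rho>\<close>.\<close>
lemma tail_deriv_bound:
  assumes "x < 1 + k"
  shows "(s - 1) * tail_deriv x \<le> (1 + k - x) powr s * (u' x)\<^sup>2"
proof -
  define W where "W = 1 + k - x"
  have "W > 0" using assms by (simp add: W_def)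
  have "(s - 1) * tail_deriv x = W powr (s - 2) * ((s - 1) * (2 * W * u x * u' x - (s - 1) * (u x)\<^sup>2))"
    by (simp add: tail_deriv_def W_def)
  also have "(s - 1) * (2 * W * u x * u' x - (s - 1) * (u x)\<^sup>2) = W\<^sup>2 * (u' x)\<^sup>2 - (W * u' x - (s - 1) * u x)\<^sup>2"
    by (simp add: power2_eq_square algebra_simps)
  also have "W powr (s - 2) * (W\<^sup>2 * (u' x)\<^sup>2 - (W * u' x - (s - 1) * u x)\<^sup>2) \<le> W powr (s - 2) * (W\<^sup>2 * (u' x)\<^sup>2)"
    by (intro mult_left_mono) auto
  also have "W\<^sup>2 = W powr 2"
    using \<open>W > 0\<close> by (simp add: powr_numeral)
  also have "W powr (s - 2) * (W powr 2 * (u' x)\<^sup>2) = W powr s * (u' x)\<^sup>2"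
    by (simp add: mult.assoc[symmetric] powr_add[symmetric])
  finally show ?thesis by (simp add: W_def)
qed

lemma energy_eq:
  "energy \<rho> = (1 + k - \<rho>) powr s * \<rho> ^ (d - 2) * (\<rho> * ((u' \<rho>)\<^sup>2 + (u \<rho>)\<^sup>2 / \<rho>\<^sup>2))"
  unfolding energy_def power_dim_minus_two_mult[symmetric] by (simp add: algebra_simps)

lemma interior_integrand_le_energy:
  assumes r: "0 < r" "r \<le> (1 + k) / 2" and \<rho>: "\<rho> \<in> {r/2..r}"
  shows "3 * r ^ (d - 2) * (1 + k - r) powr s * ((2 / r) * (u \<rho>)\<^sup>2 + \<bar>2 * u \<rho> * u' \<rho>\<bar>)
    \<le> 9 * 4 ^ d * 2 powr \<bar>s\<bar> * energy \<rho>"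
proof -
  have "0 < \<rho>" using r \<rho> by auto
  define V where "V = (1 + k - \<rho>) powr s * \<rho> ^ (d - 2)"
  define P where "P = (u' \<rho>)\<^sup>2 + (u \<rho>)\<^sup>2 / \<rho>\<^sup>2"
  have "0 \<le> V" using \<open>0 < \<rho>\<close> by (simp add: V_def)
  have "3 * r ^ (d - 2) * (1 + k - r) powr s \<le> 3 * (4 ^ d * \<rho> ^ (d - 2)) * (2 powr \<bar>s\<bar> * (1 + k - \<rho>) powr s)"
    using \<rho> r k by (intro mult_mono power_le_power_scaled powr_le_powr_abs_mult) auto
  then have weight: "3 * r ^ (d - 2) * (1 + k - r) powr s \<le> 3 * 4 ^ d * 2 powr \<bar>s\<bar> * V"
    by (simp add: V_def algebra_simps)
  have "(2 / r) * (u \<rho>)\<^sup>2 \<le> (2 / \<rho>) * (u \<rho>)\<^sup>2"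
    using \<rho> \<open>0 < \<rho>\<close> by (intro mult_right_mono divide_left_mono) auto
  also have "\<dots> \<le> 2 * (\<rho> * P)"
    using \<open>0 < \<rho>\<close> by (simp add: P_def field_simps power2_eq_square)
  finally have "(2 / r) * (u \<rho>)\<^sup>2 + \<bar>2 * u \<rho> * u' \<rho>\<bar> \<le> 3 * (\<rho> * P)"
    using abs_two_mult_le_scaled_squares[OF \<open>0 < \<rho>\<close>, of "u \<rho>" "u' \<rho>"] by (simp add: P_def)
  then have "3 * r ^ (d - 2) * (1 + k - r) powr s * ((2 / r) * (u \<rho>)\<^sup>2 + \<bar>2 * u \<rho> * u' \<rho>\<bar>)
      \<le> (3 * 4 ^ d * 2 powr \<bar>s\<bar> * V) * (3 * (\<rho> * P))"
    by (rule mult_mono[OF weight]) (use \<open>0 \<le> V\<close> r in auto)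
  also have "\<dots> = 9 * 4 ^ d * 2 powr \<bar>s\<bar> * energy \<rho>"
    by (simp add: energy_eq V_def P_def)
  finally show ?thesis .
qed

lemma trace_bound_interior:
  assumes r: "0 < r" "r \<le> (1 + k) / 2"
  shows "trace_weight r * (u r)\<^sup>2 \<le> 9 * 4 ^ d * 2 powr \<bar>s\<bar> * integral {r/2..r} energy"
proof -
  define g where "g \<rho> = (2 / r) * (u \<rho>)\<^sup>2 + \<bar>2 * u \<rho> * u' \<rho>\<bar>" for \<rho>
  have cont: "continuous_on {r/2..r} u" "continuous_on {r/2..r} u'"
    using continuous_on_profile[of "r/2"] r by auto
  have "(u r)\<^sup>2 \<le> integral {r/2..r} (\<lambda>\<rho>. (u \<rho>)\<^sup>2) / (r - r/2) + integral {r/2..r} (\<lambda>\<rho>. \<bar>2 * u \<rho> * u' \<rho>\<bar>)"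
    using r cont has_deriv
    by (intro le_mean_plus_integral_of_deriv_le[where f'="\<lambda>\<rho>. 2 * u \<rho> * u' \<rho>"])
       (auto intro!: derivative_eq_intros continuous_intros)
  also have "\<dots> = integral {r/2..r} g"
    unfolding g_def using cont r
    by (subst integral_add) (auto intro!: integrable_continuous_interval continuous_intros simp: field_simps)
  finally have square: "(u r)\<^sup>2 \<le> integral {r/2..r} g" .
  have W: "(1 + k) / 2 \<le> 1 + k - r" "0 < 1 + k - r" using r k by auto
  have "trace_weight r = r ^ (d - 2) * ((1 + k + r) * (1 + k - r) powr (s - 1))"
    by (simp add: trace_weight_def)
  also have "(1 + k + r) * (1 + k - r) powr (s - 1) \<le> (3 * (1 + k - r)) * (1 + k - r) powr (s - 1)"
    using W r by (intro mult_right_mono) auto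
  also have "(3 * (1 + k - r)) * (1 + k - r) powr (s - 1) = 3 * (1 + k - r) powr s"
    using W by (simp add: powr_diff field_simps)
  finally have "trace_weight r \<le> 3 * r ^ (d - 2) * (1 + k - r) powr s"
    using r by (simp add: mult_left_mono)
  then have "trace_weight r * (u r)\<^sup>2 \<le> 3 * r ^ (d - 2) * (1 + k - r) powr s * integral {r/2..r} g"
    using square r by (intro mult_mono) auto
  also have "\<dots> = integral {r/2..r} (\<lambda>\<rho>. 3 * r ^ (d - 2) * (1 + k - r) powr s * g \<rho>)"
    by simp
  also have "\<dots> \<le> 9 * 4 ^ d * 2 powr \<bar>s\<bar> * integral {r/2..r} energy"
    using r k cont unfolding g_def
    by (intro integral_le_energy interior_integrand_le_energy continuous_intros) auto
  finally show ?thesis .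
qed

lemma energy_ge:
  assumes "0 < \<rho>"
  shows "(1 + k - \<rho>) powr s * \<rho> ^ (d - 2) * (\<rho> * (u' \<rho>)\<^sup>2) \<le> energy \<rho>"
    and "(1 + k - \<rho>) powr s * \<rho> ^ (d - 2) * (\<rho> * ((u \<rho>)\<^sup>2 / \<rho>\<^sup>2)) \<le> energy \<rho>"
proof -
  have "0 \<le> (1 + k - \<rho>) powr s * \<rho> ^ (d - 2)" "0 \<le> \<rho>" using assms by auto
  then show "(1 + k - \<rho>) powr s * \<rho> ^ (d - 2) * (\<rho> * (u' \<rho>)\<^sup>2) \<le> energy \<rho>"
    and "(1 + k - \<rho>) powr s * \<rho> ^ (d - 2) * (\<rho> * ((u \<rho>)\<^sup>2 / \<rho>\<^sup>2)) \<le> energy \<rho>"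
    unfolding energy_eq by (intro mult_left_mono; simp)+
qed

lemma boundary_integrand_le_energy:
  assumes r: "(1 + k) / 2 \<le> r" and \<rho>: "\<rho> \<in> {r/4..k}"
  shows "r ^ (d - 2) * (1 + k + r) * ((1 + k - \<rho>) powr s * (u' \<rho>)\<^sup>2) \<le> 12 * 4 ^ d * energy \<rho>"
proof -
  have "0 < \<rho>" using r \<rho> k by auto
  have "r ^ (d - 2) * (1 + k + r) \<le> (4 ^ d * \<rho> ^ (d - 2)) * (12 * \<rho>)"
    using r \<rho> k by (intro mult_mono power_le_power_scaled) auto
  then have "r ^ (d - 2) * (1 + k + r) * ((1 + k - \<rho>) powr s * (u' \<rho>)\<^sup>2)
      \<le> (4 ^ d * \<rho> ^ (d - 2)) * (12 * \<rho>) * ((1 + k - \<rho>) powr s * (u' \<rho>)\<^sup>2)"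
    by (rule mult_right_mono) simp
  also have "\<dots> = 12 * 4 ^ d * ((1 + k - \<rho>) powr s * \<rho> ^ (d - 2) * (\<rho> * (u' \<rho>)\<^sup>2))"
    by (simp add: algebra_simps)
  also have "\<dots> \<le> 12 * 4 ^ d * energy \<rho>"
    using energy_ge(1)[OF \<open>0 < \<rho>\<close>] by simp
  finally show ?thesis .
qed

lemma tail_integrand_le_energy:
  assumes r: "(1 + k) / 2 \<le> r" "r \<le> k" and \<rho>: "\<rho> \<in> {r/4..r/2}"
  shows "r ^ (d - 2) * (1 + k + r) * (4 / r) * tail \<rho> \<le> 16 * 4 ^ d * energy \<rho>"
proof -
  define W where "W = 1 + k - \<rho>"
  have "0 < \<rho>" "0 < W" using r \<rho> k by (auto simp: W_def)
  have "tail \<rho> = W powr s * (u \<rho>)\<^sup>2 / W"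
    using \<open>0 < W\<close> by (simp add: tail_def W_def powr_diff)
  moreover have "r ^ (d - 2) * (1 + k + r) * (4 / r) \<le> (4 ^ d * \<rho> ^ (d - 2)) * (4 * W) * (4 / \<rho>)"
    using r \<rho> k unfolding W_def by (intro mult_mono power_le_power_scaled divide_left_mono) auto
  ultimately have "r ^ (d - 2) * (1 + k + r) * (4 / r) * tail \<rho>
      \<le> (4 ^ d * \<rho> ^ (d - 2)) * (4 * W) * (4 / \<rho>) * (W powr s * (u \<rho>)\<^sup>2 / W)"
    using \<open>0 < W\<close> by (simp only:) (rule mult_right_mono, simp_all)
  also have "\<dots> = 16 * 4 ^ d * (W powr s * \<rho> ^ (d - 2) * (\<rho> * ((u \<rho>)\<^sup>2 / \<rho>\<^sup>2)))"
    using \<open>0 < \<rho>\<close> \<open>0 < W\<close> by (simp add: field_simps power2_eq_square)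
  also have "\<dots> \<le> 16 * 4 ^ d * energy \<rho>"
    using energy_ge(2)[OF \<open>0 < \<rho>\<close>] unfolding W_def by (intro mult_left_mono) auto
  finally show ?thesis .
qed

lemma trace_bound_subcritical:
  assumes s: "s < 1" and r: "(1 + k) / 2 \<le> r" "r \<le> k"
  shows "trace_weight r * (u r)\<^sup>2 \<le> 12 * 4 ^ d / (1 - s) * integral {r..k} energy"
proof -
  have "0 < r" using r k by simp
  define g where "g \<rho> = (1 + k - \<rho>) powr s * (u' \<rho>)\<^sup>2" for \<rho>
  have cont: "continuous_on {r..k} u'"
    using continuous_on_profile[OF \<open>0 < r\<close>] by simp
  have "(\<lambda>\<rho>. - tail \<rho>) k - (\<lambda>\<rho>. - tail \<rho>) r \<le> integral {r..k} (\<lambda>\<rho>. g \<rho> / (1 - s))"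
  proof (rule diff_le_integral_of_deriv_le[where f'="\<lambda>\<rho>. - tail_deriv \<rho>"])
    fix x assume x: "x \<in> {r..k}"
    then have "0 < x" "x < 1 + k" using \<open>0 < r\<close> by auto
    then show "((\<lambda>\<rho>. - tail \<rho>) has_real_derivative - tail_deriv x) (at x)"
      by (intro DERIV_minus tail_has_derivative)
    show "- tail_deriv x \<le> g x / (1 - s)"
      using tail_deriv_bound[OF \<open>x < 1 + k\<close>] s by (simp add: g_def field_simps)
  qed (use r cont s in \<open>auto simp: g_def intro!: integrable_continuous_interval continuous_intros\<close>)
  then have "tail r \<le> integral {r..k} g / (1 - s)"
    by (simp add: tail_def vanishes)
  then have "r ^ (d - 2) * (1 + k + r) * tail r \<le> r ^ (d - 2) * (1 + k + r) * (integral {r..k} g / (1 - s))"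
    using \<open>0 < r\<close> k by (intro mult_left_mono) auto
  then have "trace_weight r * (u r)\<^sup>2 \<le> integral {r..k} (\<lambda>\<rho>. r ^ (d - 2) * (1 + k + r) * g \<rho>) / (1 - s)"
    by (simp add: trace_weight_def tail_def mult_ac)
  also have "\<dots> \<le> 12 * 4 ^ d * integral {r..k} energy / (1 - s)"
    using r k s cont unfolding g_def
    by (intro divide_right_mono integral_le_energy boundary_integrand_le_energy continuous_intros) auto
  finally show ?thesis by simp
qed

lemma tail_le_mean_plus_integral:
  assumes s: "s > 1" and r: "(1 + k) / 2 \<le> r" "r \<le> k"
  shows "tail r \<le> integral {r/4..r/2} tail / (r/2 - r/4)
    + integral {r/4..r} (\<lambda>\<rho>. (1 + k - \<rho>) powr s * (u' \<rho>)\<^sup>2 / (s - 1))"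
proof (rule le_mean_plus_integral_of_deriv_le[where f'=tail_deriv])
  have "0 < r" using r k by simp
  fix x assume x: "x \<in> {r/4..r}"
  then have "0 < x" "x < 1 + k" using \<open>0 < r\<close> r by auto
  then show "(tail has_real_derivative tail_deriv x) (at x)"
    by (rule tail_has_derivative)
  show "tail_deriv x \<le> (1 + k - x) powr s * (u' x)\<^sup>2 / (s - 1)"
    using tail_deriv_bound[OF \<open>x < 1 + k\<close>] s by (simp add: field_simps)
next
  show "continuous_on {r/4..r} (\<lambda>\<rho>. (1 + k - \<rho>) powr s * (u' \<rho>)\<^sup>2 / (s - 1))"
    using continuous_on_profile[of "r/4" r] r k s by (intro continuous_intros) auto
qed (use r k s in auto)

lemma trace_bound_supercritical:
  assumes s: "s > 1" and r: "(1 + k) / 2 \<le> r" "r \<le> k"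
  shows "trace_weight r * (u r)\<^sup>2 \<le> 4 ^ d * (16 + 12 / (s - 1)) * integral {r/4..r} energy"
proof -
  have "0 < r" using r k by simp
  define g where "g \<rho> = (1 + k - \<rho>) powr s * (u' \<rho>)\<^sup>2" for \<rho>
  define N where "N = r ^ (d - 2) * (1 + k + r)"
  have cont: "continuous_on {r/4..r} u" "continuous_on {r/4..r} u'"
    using continuous_on_profile[of "r/4"] \<open>0 < r\<close> by auto
  have "tail r \<le> integral {r/4..r/2} tail / (r/2 - r/4) + integral {r/4..r} (\<lambda>\<rho>. g \<rho> / (s - 1))"
    unfolding g_def by (rule tail_le_mean_plus_integral[OF s r])
  then have "N * tail r \<le> N * (integral {r/4..r/2} tail / (r/2 - r/4) + integral {r/4..r} (\<lambda>\<rho>. g \<rho> / (s - 1)))"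
    using \<open>0 < r\<close> k by (intro mult_left_mono) (auto simp: N_def)
  also have "\<dots> = integral {r/4..r/2} (\<lambda>\<rho>. N * (4 / r) * tail \<rho>) + integral {r/4..r} (\<lambda>\<rho>. N * g \<rho>) / (s - 1)"
    by (simp add: distrib_left)
  also have "N * tail r = trace_weight r * (u r)\<^sup>2"
    by (simp add: trace_weight_def tail_def N_def mult_ac)
  finally have "trace_weight r * (u r)\<^sup>2
      \<le> integral {r/4..r/2} (\<lambda>\<rho>. N * (4 / r) * tail \<rho>) + integral {r/4..r} (\<lambda>\<rho>. N * g \<rho>) / (s - 1)" .
  also have "integral {r/4..r/2} (\<lambda>\<rho>. N * (4 / r) * tail \<rho>) \<le> 16 * 4 ^ d * integral {r/4..r/2} energy"
  proof (rule integral_le_energy)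
    show "continuous_on {r/4..r/2} (\<lambda>\<rho>. N * (4 / r) * tail \<rho>)"
      unfolding tail_def using cont r k by (intro continuous_intros continuous_on_subset[OF cont(1)]) auto
  next
    fix \<rho> assume "\<rho> \<in> {r/4..r/2}"
    then show "N * (4 / r) * tail \<rho> \<le> 16 * 4 ^ d * energy \<rho>"
      unfolding N_def by (rule tail_integrand_le_energy[OF r])
  qed (use r k \<open>0 < r\<close> in auto)
  also have "integral {r/4..r} (\<lambda>\<rho>. N * g \<rho>) \<le> 12 * 4 ^ d * integral {r/4..r} energy"
  proof (rule integral_le_energy)
    show "continuous_on {r/4..r} (\<lambda>\<rho>. N * g \<rho>)"
      unfolding g_def using cont r k by (intro continuous_intros) auto
  qed (use r k \<open>0 < r\<close> in \<open>auto simp: N_def g_def intro: boundary_integrand_le_energy\<close>)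
  also have "integral {r/4..r/2} energy \<le> integral {r/4..r} energy"
    using \<open>0 < r\<close> r k
    by (intro integral_subset_le integrable_continuous_interval continuous_on_energy)
       (auto intro!: energy_nonneg)
  finally show ?thesis
    using s by (simp add: divide_right_mono algebra_simps add_divide_distrib)
qed

definition total_energy :: ennreal where
  "total_energy = (\<integral>\<^sup>+\<rho>. ennreal (energy \<rho>) * indicator {0<..k} \<rho> \<partial>lborel)"

lemma integral_energy_le_total_energy:
  assumes "0 < a" "a \<le> b" "b \<le> k"
  shows "ennreal (integral {a..b} energy) \<le> total_energy"
proof -
  have "(energy has_integral integral {a..b} energy) {a..b}"
    using assms k by (intro integrable_integral integrable_continuous_interval continuous_on_energy) auto
  then have "ennreal (integral {a..b} energy) = (\<integral>\<^sup>+\<rho>. ennreal (energy \<rho>) * indicator {a..b} \<rho> \<partial>lborel)"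
    using assms by (intro nn_integral_has_integral_lebesgue'[symmetric]) (auto intro: energy_nonneg)
  also have "\<dots> \<le> total_energy"
    unfolding total_energy_def using assms by (intro nn_integral_mono) (auto simp: indicator_def)
  finally show ?thesis .
qed

lemma trace_bound:
  assumes "s \<noteq> 1" "0 < r" "r \<le> k"
  shows "ennreal (trace_weight r * (u r)\<^sup>2) \<le> ennreal (trace_const d s) * total_energy"
proof -
  have "\<exists>a b c. 0 < a \<and> a \<le> b \<and> b \<le> k \<and> 0 \<le> c \<and> c \<le> trace_const d s
      \<and> trace_weight r * (u r)\<^sup>2 \<le> c * integral {a..b} energy"
  proof (cases "r \<le> (1 + k) / 2")
    case True
    then show ?thesis
      using trace_bound_interior[OF \<open>0 < r\<close> True] assms
      by - (rule exI[of _ "r/2"], rule exI[of _ r], rule exI[of _ "9 * 4 ^ d * 2 powr \<bar>s\<bar>"], auto simp: trace_const_ge)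
  next
    case False
    consider "s < 1" | "s > 1" using \<open>s \<noteq> 1\<close> by linarith
    then show ?thesis
    proof cases
      case 1
      then show ?thesis
        using trace_bound_subcritical[OF 1 _ \<open>r \<le> k\<close>] trace_const_ge(3)[of d s] False assms
        by - (rule exI[of _ r], rule exI[of _ k], rule exI[of _ "12 * 4 ^ d / (1 - s)"], auto)
    next
      case 2
      then show ?thesis
        using trace_bound_supercritical[OF 2 _ \<open>r \<le> k\<close>] trace_const_ge(2)[of d s] False assms
        by - (rule exI[of _ "r/4"], rule exI[of _ r], rule exI[of _ "4 ^ d * (16 + 12 / (s - 1))"], auto)
    qed
  qed
  then obtain a b c where ab: "0 < a" "a \<le> b" "b \<le> k" and c: "0 \<le> c" "c \<le> trace_const d s"
    and bound: "trace_weight r * (u r)\<^sup>2 \<le> c * integral {a..b} energy"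
    by blast
  have "0 \<le> integral {a..b} energy"
    using ab k by (intro integral_nonneg integrable_continuous_interval continuous_on_energy) (auto intro: energy_nonneg)
  then have "ennreal (trace_weight r * (u r)\<^sup>2) \<le> ennreal c * ennreal (integral {a..b} energy)"
    using bound c by (simp add: ennreal_mult[symmetric] ennreal_leI)
  also have "\<dots> \<le> ennreal (trace_const d s) * total_energy"
    using c by (intro mult_mono ennreal_leI integral_energy_le_total_energy[OF ab]) auto
  finally show ?thesis .
qed

end

section \<open>Integration over the sphere\<close>

lemma nn_integral_sphere_measure:
  fixes g :: "'a::euclidean_space \<Rightarrow> ennreal"
  assumes g[measurable]: "g \<in> borel_measurable borel"
  shows "(\<integral>\<^sup>+\<omega>. g \<omega> \<partial>(sphere_measure::'a measure))
       = (\<integral>\<^sup>+x. indicator (ball 0 1 - {0}) x * (ennreal (real DIM('a)) * g (x /\<^sub>R norm x)) \<partial>lborel)"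
proof -
  let ?M = "density (restrict_space lborel (ball 0 1 - {0})) (\<lambda>_. ennreal (real DIM('a)))"
  have "(\<lambda>x::'a. x /\<^sub>R norm x) \<in> measurable (restrict_space lborel (ball 0 1 - {0})) (restrict_space borel (sphere 0 1))"
    by (rule measurable_restrict_space2) (auto intro: measurable_restrict_space1)
  then have "(\<integral>\<^sup>+\<omega>. g \<omega> \<partial>(sphere_measure::'a measure)) = (\<integral>\<^sup>+x. g (x /\<^sub>R norm x) \<partial>?M)"
    unfolding sphere_measure_def by (intro nn_integral_distr) (auto intro: measurable_restrict_space1)
  also have "\<dots> = (\<integral>\<^sup>+x. ennreal (real DIM('a)) * g (x /\<^sub>R norm x) \<partial>(restrict_space lborel (ball 0 1 - {0})))"
    by (rule nn_integral_density) (auto intro: measurable_restrict_space1)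
  also have "\<dots> = (\<integral>\<^sup>+x. ennreal (real DIM('a)) * g (x /\<^sub>R norm x) * indicator (ball 0 1 - {0}) x \<partial>lborel)"
    by (rule nn_integral_restrict_space) auto
  finally show ?thesis by (simp add: mult_ac)
qed

lemma L2_norm_power2: "(L2_norm M g)\<^sup>2 = (\<integral>\<^sup>+x. ennreal ((g x)\<^sup>2) \<partial>M)"
proof -
  define I where "I = (\<integral>\<^sup>+x. ennreal ((g x)\<^sup>2) \<partial>M)"
  have "I \<noteq> \<infinity> \<Longrightarrow> (ennreal (sqrt (enn2real I)))\<^sup>2 = I"
    by (subst ennreal_power) (auto simp: ennreal_enn2real_if)
  then show ?thesis
    unfolding L2_norm_def Let_def I_def[symmetric] by auto
qed

lemma zero_outside_supp:
  fixes \<phi> :: "'a::euclidean_space \<Rightarrow> real"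
  assumes "continuous_on UNIV \<phi>" "supp \<phi> \<subseteq> cball 0 k" "k \<le> norm x"
  shows "\<phi> x = 0"
proof -
  have "open {y. \<phi> y \<noteq> 0}"
    using assms(1) by (intro open_Collect_neq) (auto intro: continuous_intros)
  moreover have "{y. \<phi> y \<noteq> 0} \<subseteq> cball 0 k"
    using closure_subset assms(2) unfolding supp_def by (rule subset_trans)
  ultimately have "{y. \<phi> y \<noteq> 0} \<subseteq> interior (cball 0 k)"
    by (intro interior_maximal)
  then have "{y. \<phi> y \<noteq> 0} \<subseteq> ball 0 k"
    by simp
  then show ?thesis using assms(3) by auto
qed

lemma radial_deriv_eq:
  assumes "(\<phi> has_derivative blinfun_apply D) (at x)"
  shows "radial_deriv \<phi> x = blinfun_apply D (x /\<^sub>R norm x)"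
  unfolding radial_deriv_def using frechet_derivative_at[OF assms] by simp

lemma continuous_on_radial_deriv:
  fixes \<phi> :: "'a::euclidean_space \<Rightarrow> real"
  assumes "\<And>x. (\<phi> has_derivative blinfun_apply (D x)) (at x)" "continuous_on UNIV D"
  shows "continuous_on (-{0}) (radial_deriv \<phi>)"
proof -
  have "continuous_on (-{0}) (\<lambda>x. blinfun_apply (D x) (x /\<^sub>R norm x))"
    using continuous_on_subset[OF assms(2)]
    by (intro bounded_bilinear.continuous_on[OF bounded_bilinear_blinfun_apply] continuous_intros) auto
  moreover have "radial_deriv \<phi> = (\<lambda>x. blinfun_apply (D x) (x /\<^sub>R norm x))"
    using radial_deriv_eq[OF assms(1)] by blast
  ultimately show ?thesis by simp
qed

lemma borel_measurable_radial_deriv: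
  fixes \<phi> :: "'a::euclidean_space \<Rightarrow> real"
  assumes "\<And>x. (\<phi> has_derivative blinfun_apply (D x)) (at x)" "continuous_on UNIV D"
  shows "radial_deriv \<phi> \<in> borel_measurable borel"
proof -
  have "(\<lambda>x. indicator (-{0}) x *\<^sub>R radial_deriv \<phi> x) \<in> borel_measurable borel"
    by (intro borel_measurable_continuous_on_indicator continuous_on_radial_deriv[OF assms]) auto
  moreover have "(\<lambda>x. indicator (-{0}) x *\<^sub>R radial_deriv \<phi> x) = radial_deriv \<phi>"
    by (auto simp: radial_deriv_eq[OF assms(1)] indicator_def fun_eq_iff)
  ultimately show ?thesis by simp
qed

definition energy_density :: "('a::euclidean_space \<Rightarrow> real) \<Rightarrow> real \<Rightarrow> real \<Rightarrow> 'a \<Rightarrow> ennreal" where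
  "energy_density \<phi> k s x = ennreal (indicator (cball 0 k - {0}) x *
     ((1 + k - norm x) powr s * ((radial_deriv \<phi> x)\<^sup>2 + (\<phi> x / norm x)\<^sup>2)))"

lemma borel_measurable_energy_density:
  fixes \<phi> :: "'a::euclidean_space \<Rightarrow> real"
  assumes "\<And>x. (\<phi> has_derivative blinfun_apply (D x)) (at x)" "continuous_on UNIV D" "k \<ge> 0"
  shows "energy_density \<phi> k s \<in> borel_measurable borel"
proof -
  define A :: "'a set" where "A = cball 0 k - {0}"
  have A: "A \<in> sets borel" unfolding A_def by (intro sets.Diff) auto
  have "continuous_on UNIV \<phi>"
    using assms(1) by (intro continuous_at_imp_continuous_on) (auto intro: has_derivative_continuous)
  then have "continuous_on A \<phi>" by (rule continuous_on_subset) simp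
  moreover have "continuous_on A (radial_deriv \<phi>)"
    using continuous_on_radial_deriv[OF assms(1,2)] by (rule continuous_on_subset) (auto simp: A_def)
  ultimately have "continuous_on A (\<lambda>x. (1 + k - norm x) powr s * ((radial_deriv \<phi> x)\<^sup>2 + (\<phi> x / norm x)\<^sup>2))"
    unfolding A_def using assms(3) by (intro continuous_intros) auto
  from borel_measurable_continuous_on_indicator[OF A this]
  have "(\<lambda>x. indicator A x * ((1 + k - norm x) powr s * ((radial_deriv \<phi> x)\<^sup>2 + (\<phi> x / norm x)\<^sup>2)))
      \<in> borel_measurable borel"
    by simp
  then show ?thesis
    unfolding energy_density_def A_def[symmetric] by measurable
qed

lemma power2_powr_half: "0 < (x::real) \<Longrightarrow> (x powr (a / 2))\<^sup>2 = x powr a"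
  by (simp add: power2_eq_square powr_add[symmetric])

lemma nn_integral_energy_density_le:
  fixes \<phi> :: "'a::euclidean_space \<Rightarrow> real"
  assumes [measurable]: "\<phi> \<in> borel_measurable borel" "radial_deriv \<phi> \<in> borel_measurable borel"
  shows "(\<integral>\<^sup>+x. indicator (-{0}) x * energy_density \<phi> k s x \<partial>lborel)
    \<le> (L2_norm lborel (\<lambda>x. (1 + k - norm x) powr (s/2) * radial_deriv \<phi> x))\<^sup>2
      + (L2_norm lborel (\<lambda>x. (1 + k - norm x) powr (s/2) * (\<phi> x / norm x)))\<^sup>2"
proof -
  define A where "A x = (1 + k - norm x) powr (s/2) * radial_deriv \<phi> x" for x
  define B where "B x = (1 + k - norm x) powr (s/2) * (\<phi> x / norm x)" for x
  have "(\<integral>\<^sup>+x. indicator (-{0}) x * energy_density \<phi> k s x \<partial>lborel)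
      \<le> (\<integral>\<^sup>+x. ennreal ((A x)\<^sup>2) + ennreal ((B x)\<^sup>2) \<partial>lborel)"
  proof (rule nn_integral_mono)
    fix x :: 'a
    show "indicator (-{0}) x * energy_density \<phi> k s x \<le> ennreal ((A x)\<^sup>2) + ennreal ((B x)\<^sup>2)"
    proof (cases "x \<in> cball 0 k - {0}")
      case True
      then have "0 < 1 + k - norm x" by auto
      then have "(A x)\<^sup>2 + (B x)\<^sup>2 = (1 + k - norm x) powr s * ((radial_deriv \<phi> x)\<^sup>2 + (\<phi> x / norm x)\<^sup>2)"
        unfolding A_def B_def power_mult_distrib power2_powr_half[OF \<open>0 < 1 + k - norm x\<close>]
        by (simp add: algebra_simps)
      then have "energy_density \<phi> k s x = ennreal ((A x)\<^sup>2 + (B x)\<^sup>2)"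
        using True by (simp add: energy_density_def)
      moreover have "indicator (-{0}) x = (1::ennreal)" using True by simp
      ultimately show ?thesis by (simp add: ennreal_plus)
    qed (auto simp: energy_density_def)
  qed
  also have "\<dots> = (\<integral>\<^sup>+x. ennreal ((A x)\<^sup>2) \<partial>lborel) + (\<integral>\<^sup>+x. ennreal ((B x)\<^sup>2) \<partial>lborel)"
    unfolding A_def B_def by (rule nn_integral_add) measurable
  finally show ?thesis
    by (simp add: L2_norm_power2 A_def B_def)
qed

lemma radial_profile_restriction:
  fixes \<phi> :: "'a::euclidean_space \<Rightarrow> real"
  assumes D: "\<And>x. (\<phi> has_derivative blinfun_apply (D x)) (at x)" "continuous_on UNIV D"
    and supp: "supp \<phi> \<subseteq> cball 0 k" and "k \<ge> 1" "DIM('a) \<ge> 2" and \<omega>: "norm \<omega> = 1"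
  shows "radial_profile (\<lambda>\<rho>. \<phi> (\<rho> *\<^sub>R \<omega>)) (\<lambda>\<rho>. blinfun_apply (D (\<rho> *\<^sub>R \<omega>)) \<omega>) k (DIM('a))"
proof
  fix \<rho> :: real
  have "((\<lambda>\<rho>. \<phi> (\<rho> *\<^sub>R \<omega>)) has_derivative (\<lambda>h. blinfun_apply (D (\<rho> *\<^sub>R \<omega>)) (h *\<^sub>R \<omega>))) (at \<rho>)"
    by (rule has_derivative_compose[OF _ D(1)]) (auto intro!: derivative_eq_intros)
  moreover have "(\<lambda>h. blinfun_apply (D (\<rho> *\<^sub>R \<omega>)) (h *\<^sub>R \<omega>)) = (*) (blinfun_apply (D (\<rho> *\<^sub>R \<omega>)) \<omega>)"
    by (auto simp: blinfun.scaleR_right)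
  ultimately show "((\<lambda>\<rho>. \<phi> (\<rho> *\<^sub>R \<omega>)) has_real_derivative blinfun_apply (D (\<rho> *\<^sub>R \<omega>)) \<omega>) (at \<rho>)"
    unfolding has_field_derivative_def by simp
next
  have "continuous_on {0<..} (\<lambda>\<rho>::real. D (\<rho> *\<^sub>R \<omega>))"
    by (rule continuous_on_compose2[OF D(2)]) (auto intro: continuous_intros)
  then show "continuous_on {0<..} (\<lambda>\<rho>. blinfun_apply (D (\<rho> *\<^sub>R \<omega>)) \<omega>)"
    by (intro bounded_bilinear.continuous_on[OF bounded_bilinear_blinfun_apply] continuous_intros)
next
  have "continuous_on UNIV \<phi>"
    using D(1) by (intro continuous_at_imp_continuous_on) (auto intro: has_derivative_continuous)
  then show "\<phi> (k *\<^sub>R \<omega>) = 0"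
    using zero_outside_supp[OF _ supp] \<omega> \<open>k \<ge> 1\<close> by simp
qed (use assms in auto)

lemma ray_trace_bound:
  fixes \<phi> :: "'a::euclidean_space \<Rightarrow> real"
  assumes D: "\<And>x. (\<phi> has_derivative blinfun_apply (D x)) (at x)" "continuous_on UNIV D"
    and supp: "supp \<phi> \<subseteq> cball 0 k" and k: "k \<ge> 1" and s: "s \<noteq> 1" and dim: "DIM('a) \<ge> 2"
    and \<omega>: "norm \<omega> = 1" and r: "0 < r" "r \<le> k"
  shows "ennreal (r ^ (DIM('a) - 2) * (1 + k + r) * (1 + k - r) powr (s - 1) * (\<phi> (r *\<^sub>R \<omega>))\<^sup>2)
    \<le> ennreal (trace_const DIM('a) s)
      * (\<integral>\<^sup>+\<rho>. indicator {0<..} \<rho> * ennreal (\<rho> ^ (DIM('a) - 1)) * energy_density \<phi> k s (\<rho> *\<^sub>R \<omega>) \<partial>lborel)"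
proof -
  define u where "u \<rho> = \<phi> (\<rho> *\<^sub>R \<omega>)" for \<rho>
  define u' where "u' \<rho> = blinfun_apply (D (\<rho> *\<^sub>R \<omega>)) \<omega>" for \<rho>
  interpret radial_profile u u' k s "DIM('a)"
    unfolding u_def u'_def by (rule radial_profile_restriction[OF D supp k dim \<omega>])
  have "total_energy
      = (\<integral>\<^sup>+\<rho>. indicator {0<..} \<rho> * ennreal (\<rho> ^ (DIM('a) - 1)) * energy_density \<phi> k s (\<rho> *\<^sub>R \<omega>) \<partial>lborel)"
    unfolding total_energy_def
  proof (rule nn_integral_cong)
    fix \<rho> :: real
    show "ennreal (energy \<rho>) * indicator {0<..k} \<rho>
      = indicator {0<..} \<rho> * ennreal (\<rho> ^ (DIM('a) - 1)) * energy_density \<phi> k s (\<rho> *\<^sub>R \<omega>)"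
    proof (cases "0 < \<rho>")
      case True
      then have "\<rho> ^ (DIM('a) - 1) * ((1 + k - \<rho>) powr s * ((u' \<rho>)\<^sup>2 + (u \<rho> / \<rho>)\<^sup>2)) = energy \<rho>"
        by (simp add: energy_def power_divide mult_ac)
      moreover have "radial_deriv \<phi> (\<rho> *\<^sub>R \<omega>) = u' \<rho>"
        using True \<omega> by (simp add: radial_deriv_eq[OF D(1)] u'_def)
      ultimately show ?thesis
        using True \<omega> by (auto simp: energy_density_def indicator_def u_def ennreal_mult[symmetric] energy_nonneg)
    qed simp
  qed
  then show ?thesis
    using trace_bound[OF s r] by (simp add: trace_weight_def u_def)
qed

lemma power2_trace_weight_root:
  fixes r :: real
  assumes "n \<ge> 2" "0 < r" "r < 1 + k" "0 \<le> k"
  shows "(r powr ((real n - 2) / 2) * (1 + k + r) powr (1/2) * (1 + k - r) powr ((s - 1) / 2))\<^sup>2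
    = r ^ (n - 2) * (1 + k + r) * (1 + k - r) powr (s - 1)"
proof -
  have "(r powr ((real n - 2) / 2) * (1 + k + r) powr (1/2) * (1 + k - r) powr ((s - 1) / 2))\<^sup>2
      = r powr (real n - 2) * (1 + k + r) powr 1 * (1 + k - r) powr (s - 1)"
    unfolding power_mult_distrib using assms by (simp only: power2_powr_half)
  also have "r powr (real n - 2) = r ^ (n - 2)"
    using assms by (simp add: powr_realpow[symmetric] of_nat_diff)
  finally show ?thesis using assms by simp
qed

lemma sphere_trace_le_energy:
  fixes \<phi> :: "'a::euclidean_space \<Rightarrow> real"
  assumes D: "\<And>x. (\<phi> has_derivative blinfun_apply (D x)) (at x)" "continuous_on UNIV D"
    and supp: "supp \<phi> \<subseteq> cball 0 k" and k: "k \<ge> 1" and s: "s \<noteq> 1" and dim: "DIM('a) \<ge> 2"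
    and r: "0 < r" "r \<le> k"
  shows "ennreal (r ^ (DIM('a) - 2) * (1 + k + r) * (1 + k - r) powr (s - 1))
      * (\<integral>\<^sup>+\<omega>. ennreal ((\<phi> (r *\<^sub>R \<omega>))\<^sup>2) \<partial>sphere_measure)
    \<le> ennreal (trace_const DIM('a) s) * (\<integral>\<^sup>+y. indicator (-{0}) y * energy_density \<phi> k s y \<partial>lborel)"
proof -
  let ?n = "ennreal (real DIM('a))" and ?K = "ennreal (trace_const DIM('a) s)"
  define w where "w = r ^ (DIM('a) - 2) * (1 + k + r) * (1 + k - r) powr (s - 1)"
  define ray where "ray x = (\<integral>\<^sup>+\<rho>. indicator {0<..} \<rho> * ennreal (\<rho> ^ (DIM('a) - 1))
    * energy_density \<phi> k s (\<rho> *\<^sub>R (x /\<^sub>R norm x)) \<partial>lborel)" for x :: 'a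
  have [measurable]: "\<phi> \<in> borel_measurable borel" "energy_density \<phi> k s \<in> borel_measurable borel"
    using D(1) k by (auto intro!: borel_measurable_continuous_onI continuous_at_imp_continuous_on
      borel_measurable_energy_density[OF D] intro: has_derivative_continuous)
  have "ennreal w * (\<integral>\<^sup>+\<omega>. ennreal ((\<phi> (r *\<^sub>R \<omega>))\<^sup>2) \<partial>sphere_measure)
      = (\<integral>\<^sup>+x. indicator (ball 0 1 - {0}) x * (?n * ennreal (w * (\<phi> (r *\<^sub>R (x /\<^sub>R norm x)))\<^sup>2)) \<partial>lborel)"
    using r k by (simp add: nn_integral_sphere_measure nn_integral_cmult[symmetric] ennreal_mult w_def mult_ac)
  also have "\<dots> \<le> (\<integral>\<^sup>+x. indicator (ball 0 1 - {0}) x * (?n * (?K * ray x)) \<partial>lborel)"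
  proof (rule nn_integral_mono)
    fix x :: 'a
    show "indicator (ball 0 1 - {0}) x * (?n * ennreal (w * (\<phi> (r *\<^sub>R (x /\<^sub>R norm x)))\<^sup>2))
      \<le> indicator (ball 0 1 - {0}) x * (?n * (?K * ray x))"
    proof (cases "x = 0")
      case False
      then have "norm (x /\<^sub>R norm x) = 1" by simp
      from ray_trace_bound[OF D supp k s dim this r]
      show ?thesis unfolding w_def ray_def by (intro mult_left_mono) auto
    qed simp
  qed
  also have "\<dots> = (\<integral>\<^sup>+x. (?K * ?n) * (indicator (ball 0 1 - {0}) x * ray x) \<partial>lborel)"
    by (simp add: mult_ac)
  also have "\<dots> = ?K * (?n * (\<integral>\<^sup>+x. indicator (ball 0 1 - {0}) x * ray x \<partial>lborel))"
  proof -
    have "ray \<in> borel_measurable lborel"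
      unfolding ray_def
      by (rule lborel.borel_measurable_nn_integral, rule measurable_pair_lborel_of_borel) measurable
    then show ?thesis by (subst nn_integral_cmult) (auto simp: mult_ac)
  qed
  also have "\<dots> = ?K * (\<integral>\<^sup>+y. indicator (-{0}) y * energy_density \<phi> k s y \<partial>lborel)"
    unfolding ray_def by (subst nn_integral_polar) simp_all
  finally show ?thesis unfolding w_def .
qed

lemma sphere_trace_bound:
  fixes \<phi> :: "'a::euclidean_space \<Rightarrow> real"
  assumes D: "\<And>x. (\<phi> has_derivative blinfun_apply (D x)) (at x)" "continuous_on UNIV D"
    and supp: "supp \<phi> \<subseteq> cball 0 k" and k: "k \<ge> 1" and s: "s \<noteq> 1" and dim: "DIM('a) \<ge> 2"
    and r: "0 < r" "r \<le> k"
  shows "(ennreal (r powr ((real DIM('a) - 2) / 2) * (1 + k + r) powr (1/2) * (1 + k - r) powr ((s - 1) / 2))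
      * L2_norm sphere_measure (\<lambda>\<omega>. \<phi> (r *\<^sub>R \<omega>)))\<^sup>2
    \<le> ennreal (trace_const DIM('a) s) *
      ((L2_norm lborel (\<lambda>x. (1 + k - norm x) powr (s/2) * radial_deriv \<phi> x))\<^sup>2
       + (L2_norm lborel (\<lambda>x. (1 + k - norm x) powr (s/2) * (\<phi> x / norm x)))\<^sup>2)"
proof -
  have [measurable]: "\<phi> \<in> borel_measurable borel" "radial_deriv \<phi> \<in> borel_measurable borel"
    using D(1) by (auto intro!: borel_measurable_continuous_onI continuous_at_imp_continuous_on
      borel_measurable_radial_deriv[OF D] intro: has_derivative_continuous)
  have "(ennreal (r powr ((real DIM('a) - 2) / 2) * (1 + k + r) powr (1/2) * (1 + k - r) powr ((s - 1) / 2)))\<^sup>2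
      = ennreal (r ^ (DIM('a) - 2) * (1 + k + r) * (1 + k - r) powr (s - 1))"
    using r k dim by (subst ennreal_power) (simp_all add: power2_trace_weight_root)
  then have "(ennreal (r powr ((real DIM('a) - 2) / 2) * (1 + k + r) powr (1/2) * (1 + k - r) powr ((s - 1) / 2))
      * L2_norm sphere_measure (\<lambda>\<omega>. \<phi> (r *\<^sub>R \<omega>)))\<^sup>2
      = ennreal (r ^ (DIM('a) - 2) * (1 + k + r) * (1 + k - r) powr (s - 1))
        * (\<integral>\<^sup>+\<omega>. ennreal ((\<phi> (r *\<^sub>R \<omega>))\<^sup>2) \<partial>sphere_measure)"
    unfolding power_mult_distrib L2_norm_power2 by simp
  also have "\<dots> \<le> ennreal (trace_const DIM('a) s) * (\<integral>\<^sup>+y. indicator (-{0}) y * energy_density \<phi> k s y \<partial>lborel)"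
    by (rule sphere_trace_le_energy[OF D supp k s dim r])
  also have "\<dots> \<le> ennreal (trace_const DIM('a) s) *
      ((L2_norm lborel (\<lambda>x. (1 + k - norm x) powr (s/2) * radial_deriv \<phi> x))\<^sup>2
       + (L2_norm lborel (\<lambda>x. (1 + k - norm x) powr (s/2) * (\<phi> x / norm x)))\<^sup>2)"
    by (intro mult_left_mono nn_integral_energy_density_le) auto
  finally show ?thesis .
qed

lemma power2_le_imp_le_ennreal:
  fixes a b :: ennreal
  assumes "a\<^sup>2 \<le> b\<^sup>2"
  shows "a \<le> b"
proof (rule ccontr)
  assume "\<not> a \<le> b"
  then have "b < a" by simp
  show False
  proof (cases a rule: ennreal_cases)
    case (real x)
    then obtain y where y: "b = ennreal y" "0 \<le> y"
      using \<open>b < a\<close> by (cases b rule: ennreal_cases) auto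
    then have "y\<^sup>2 < x\<^sup>2"
      using \<open>b < a\<close> real by (intro power_strict_mono) (auto simp: ennreal_less_iff)
    moreover have "ennreal (x\<^sup>2) \<le> ennreal (y\<^sup>2)"
      using assms real y by (simp add: ennreal_power)
    ultimately show False using y by (simp add: ennreal_le_iff)
  next
    case top
    then have "b = top"
      using assms by (simp add: top_unique power_eq_top_ennreal)
    then show False using \<open>b < a\<close> top by simp
  qed
qed

theorem proposition2p2:
  fixes s :: real
  assumes "DIM('a::euclidean_space) \<ge> 2" and "s \<noteq> 1"
  shows "\<exists>C::real. \<forall>(k::real) (\<phi>::'a \<Rightarrow> real).
           k \<ge> 1 \<longrightarrow> C1_fun \<phi> \<longrightarrow> supp \<phi> \<subseteq> cball 0 k \<longrightarrow>
           (SUP r\<in>{0<..k}.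
               ennreal (r powr ((real DIM('a) - 2) / 2) * (1 + k + r) powr (1/2)
                        * (1 + k - r) powr ((s - 1) / 2))
               * L2_norm sphere_measure (\<lambda>\<omega>. \<phi> (r *\<^sub>R \<omega>)))
           \<le> ennreal C *
             (L2_norm lborel (\<lambda>x. (1 + k - norm x) powr (s/2) * radial_deriv \<phi> x)
              + L2_norm lborel (\<lambda>x. (1 + k - norm x) powr (s/2) * (\<phi> x / norm x)))"
proof (intro exI[of _ "sqrt (trace_const DIM('a) s)"] allI impI SUP_least)
  fix k r :: real and \<phi> :: "'a \<Rightarrow> real"
  assume k: "k \<ge> 1" and "C1_fun \<phi>" and supp: "supp \<phi> \<subseteq> cball 0 k" and r: "r \<in> {0<..k}"
  then obtain D where D: "\<And>x. (\<phi> has_derivative blinfun_apply (D x)) (at x)" "continuous_on UNIV D"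
    unfolding C1_fun_def by blast
  let ?L1 = "L2_norm lborel (\<lambda>x. (1 + k - norm x) powr (s/2) * radial_deriv \<phi> x)"
  let ?L2 = "L2_norm lborel (\<lambda>x. (1 + k - norm x) powr (s/2) * (\<phi> x / norm x))"
  have K: "0 \<le> trace_const DIM('a) s" by (simp add: trace_const_def)
  have "(ennreal (r powr ((real DIM('a) - 2) / 2) * (1 + k + r) powr (1/2) * (1 + k - r) powr ((s - 1) / 2))
      * L2_norm sphere_measure (\<lambda>\<omega>. \<phi> (r *\<^sub>R \<omega>)))\<^sup>2
      \<le> ennreal (trace_const DIM('a) s) * (?L1\<^sup>2 + ?L2\<^sup>2)"
    using r by (intro sphere_trace_bound[OF D supp k assms(2,1)]) auto
  also have "\<dots> \<le> ennreal (trace_const DIM('a) s) * (?L1 + ?L2)\<^sup>2"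
    by (intro mult_left_mono) (auto simp: power2_sum)
  also have "\<dots> = (ennreal (sqrt (trace_const DIM('a) s)) * (?L1 + ?L2))\<^sup>2"
    using K by (simp add: power_mult_distrib ennreal_power)
  finally show "ennreal (r powr ((real DIM('a) - 2) / 2) * (1 + k + r) powr (1/2) * (1 + k - r) powr ((s - 1) / 2))
      * L2_norm sphere_measure (\<lambda>\<omega>. \<phi> (r *\<^sub>R \<omega>)) \<le> ennreal (sqrt (trace_const DIM('a) s)) * (?L1 + ?L2)"
    by (rule power2_le_imp_le_ennreal)
qed

end
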